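(* Let $H:\mathbb R\times\mathbb R\times\Omega\to\mathbb R$ satisfy (H1)–(H6) described in the context, fix $x\in\mathbb R$, $\omega\in\Omega$, $\mu>\tilde A(\omega)$, and let $l_\mu=(\mu-\tilde A(\omega))/c$ where $c$ is the Lipschitz constant of $H$ in $p$. Then for all $0\le t\le s$, $$\mathrm{dist}_{\mathcal H}\big(\mathcal R^\omega_{\mu,t},\mathcal R^\omega_{\mu,s}\big)\le\frac{s-t}{l_\mu}.$$
   Context: $H:\mathbb R\times\mathbb R\times\Omega\to\mathbb R$, $(p,y,\omega)\mapsto H(p,y,\omega)$. (H1) $H$ is Lipschitz in $p$ uniformly in $(y,\omega)$, with constant $c$. (H2) There are $c_0,C_0,\gamma>0$ with $-c_0|p+\gamma|\le H(p,y,\omega)\le C_0|p+\gamma|$. (H3) $\lim_{|p|\to\infty}\inf_{(y,\omega)}H(p,y,\omega)=+\infty$. (H4) There is a modulus $w$ with $|H(p,y,\omega)-H(p,x,\omega)|\le w(|x-y|(1+|p|))$. (H5) $p\mapsto H(p,y,\omega)$ is convex. (H6) $H(p,y,\omega)\ge H(0,y,\omega)$. $\tilde A(\omega)=\inf\{\mu:\ \exists v$ globally Lipschitz with $H(Dv,y,\omega)\le\mu$ in $\mathbb R$ (viscosity sense)$\}$. For $x,y\in\mathbb R$: $m_\mu(y,x,\omega)=\sup\{v(y)-v(x):\ v$ globally Lipschitz, $H(Dv,z,\omega)\le\mu$ in $\mathbb R$ in the viscosity sense$\}$. The reachable set is $\mathcal R^\omega_{\mu,t}=\{y\in\mathbb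 R:\ m_\mu(y,x,\omega)\le t\}$, and $\mathrm{dist}_{\mathcal H}(E,F)=\max\{\sup_{y\in F}\inf_{x\in E}|y-x|,\ \sup_{y\in E}\inf_{x\in F}|y-x|\}$ is the Hausdorff distance. *)

theory Defs
  imports "HOL-Analysis.Analysis"
begin

definition visc_sub ::
  "(real \<Rightarrow> real \<Rightarrow> 'w \<Rightarrow> real) \<Rightarrow> 'w \<Rightarrow> real \<Rightarrow> (real \<Rightarrow> real) \<Rightarrow> bool" where
  "visc_sub H \<omega> \<mu> v \<longleftrightarrow>
     (\<forall>y \<phi> \<phi>'. (\<forall>z. (\<phi> has_real_derivative \<phi>' z) (at z)) \<and> continuous_on UNIV \<phi>' \<and>
        (\<exists>e>0. \<forall>z. \<bar>z - y\<bar> < e \<longrightarrow> v z - \<phi> z \<le> v y - \<phi> y)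
        \<longrightarrow> H (\<phi>' y) y \<omega> \<le> \<mu>)"

definition glob_lipschitz :: "(real \<Rightarrow> real) \<Rightarrow> bool" where
  "glob_lipschitz v \<longleftrightarrow> (\<exists>L. L-lipschitz_on UNIV v)"

definition A_tilde :: "(real \<Rightarrow> real \<Rightarrow> 'w \<Rightarrow> real) \<Rightarrow> 'w \<Rightarrow> real" where
  "A_tilde H \<omega> = Inf {\<mu>. \<exists>v. glob_lipschitz v \<and> visc_sub H \<omega> \<mu> v}"

definition m_mu :: "(real \<Rightarrow> real \<Rightarrow> 'w \<Rightarrow> real) \<Rightarrow> real \<Rightarrow> real \<Rightarrow> real \<Rightarrow> 'w \<Rightarrow> real" where
  "m_mu H \<mu> y x \<omega> = Sup {v y - v x | v. glob_lipschitz v \<and> visc_sub H \<omega> \<mu> v}"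

definition reachable ::
  "(real \<Rightarrow> real \<Rightarrow> 'w \<Rightarrow> real) \<Rightarrow> real \<Rightarrow> real \<Rightarrow> real \<Rightarrow> 'w \<Rightarrow> real set" where
  "reachable H \<mu> t x \<omega> = {y. m_mu H \<mu> y x \<omega> \<le> t}"

definition hausdorff_dist :: "real set \<Rightarrow> real set \<Rightarrow> real" where
  "hausdorff_dist E F = max (SUP y\<in>F. INF x\<in>E. \<bar>y - x\<bar>) (SUP y\<in>E. INF x\<in>F. \<bar>y - x\<bar>)"

end

theory Submission
  imports Defs
begin

(* Write m(y) for m_mu H mu y x omega and l for (mu - A_tilde H omega) / c.
   Maximising v(r) - K (r - u)^2 for a Lipschitz subsolution v at level mu' produces test slopes
   at points arbitrarily close to u, so (H6) and the continuity (H4) of H in y give H(0,u) <= mu';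
   hence H(0,u) <= A_tilde, and by (H1) every slope q with |q| <= l satisfies H(q,u) <= mu.
   By coercivity (H3) all subsolutions have bounded difference quotients, so m is finite.
   For z between x and y, the maximum of a subsolution v and a cone at z rising with slope l
   towards y is again a subsolution agreeing with v at x, so m(z) + l |y - z| <= m(y).
   Thus moving a point of {m <= s} towards x by (s - t) / l lands in {m <= t}. *)

lemma local_max_diff_deriv_eq:
  fixes f g :: "real \<Rightarrow> real"
  assumes "(f has_real_derivative a) (at u)" "(g has_real_derivative b) (at u)"
    and "e > 0" "\<And>r. \<bar>r - u\<bar> < e \<Longrightarrow> f r - g r \<le> f u - g u"
  shows "a = b"
proof -
  have "((\<lambda>r. f r - g r) has_real_derivative a - b) (at u)"
    using assms by (intro derivative_intros)
  from DERIV_local_max[OF this assms(3)] show ?thesis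
    using assms(4) by (simp add: abs_minus_commute)
qed

lemma quadratic_le_linear_imp_abs_le:
  fixes \<delta> M s :: real
  assumes "0 < \<delta>" "0 \<le> M" "\<delta> * s\<^sup>2 \<le> M * \<bar>s\<bar>"
  shows "\<bar>s\<bar> \<le> M / \<delta>"
proof (cases "s = 0")
  case False
  have "(\<delta> * \<bar>s\<bar>) * \<bar>s\<bar> \<le> M * \<bar>s\<bar>"
    using assms(3) by (simp add: power2_eq_square abs_mult_self_eq mult.assoc)
  with False have "\<delta> * \<bar>s\<bar> \<le> M"
    by simp
  with assms(1) show ?thesis
    by (simp add: pos_le_divide_eq mult.commute)
qed (use assms in simp)

lemma continuous_attains_sup_superlevel:
  fixes G :: "'a::heine_borel \<Rightarrow> real"
  assumes "closed S" "continuous_on S G" "a \<in> S" "bounded {r \<in> S. G a \<le> G r}"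
  obtains r0 where "r0 \<in> S" "G a \<le> G r0" "\<And>r. r \<in> S \<Longrightarrow> G r \<le> G r0"
proof -
  define T where "T = {r \<in> S. G a \<le> G r}"
  have "T = S \<inter> G -` {G a..}"
    unfolding T_def by auto
  then have "closed T"
    using continuous_closed_preimage[OF assms(2,1) closed_atLeast] by (simp only:)
  with assms(4) have "compact T"
    unfolding T_def by (simp add: compact_eq_bounded_closed)
  moreover have "continuous_on T G"
    using assms(2) unfolding T_def by (rule continuous_on_subset) auto
  moreover have "T \<noteq> {}"
    using assms(3) unfolding T_def by auto
  ultimately obtain r0 where r0: "r0 \<in> T" "\<forall>r \<in> T. G r \<le> G r0"
    using continuous_attains_sup by blast
  show thesis
  proof
    show "r0 \<in> S" "G a \<le> G r0"
      using r0(1) unfolding T_def by auto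
    show "G r \<le> G r0" if "r \<in> S" for r
      using r0 that unfolding T_def by (cases "G a \<le> G r") auto
  qed
qed

lemma lipschitz_on_reflect:
  fixes v :: "real \<Rightarrow> real"
  shows "L-lipschitz_on UNIV v \<Longrightarrow> L-lipschitz_on UNIV (\<lambda>r. v (- r))"
proof (rule lipschitz_onI)
  fix a b :: real
  assume "L-lipschitz_on UNIV v"
  then have "dist (v (- a)) (v (- b)) \<le> L * dist (- a) (- b)"
    by (simp add: lipschitz_onD)
  then show "dist (v (- a)) (v (- b)) \<le> L * dist a b"
    by (simp add: dist_minus)
qed (use lipschitz_on_nonneg in auto)

lemma lipschitz_on_max:
  fixes f g :: "'a::metric_space \<Rightarrow> real"
  assumes "L-lipschitz_on S f" "M-lipschitz_on S g"
  shows "(max L M)-lipschitz_on S (\<lambda>x. max (f x) (g x))"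
proof (rule lipschitz_onI)
  fix a b assume "a \<in> S" "b \<in> S"
  have "\<bar>f a - f b\<bar> \<le> L * dist a b" "\<bar>g a - g b\<bar> \<le> M * dist a b"
    using lipschitz_onD[OF assms(1) \<open>a \<in> S\<close> \<open>b \<in> S\<close>] lipschitz_onD[OF assms(2) \<open>a \<in> S\<close> \<open>b \<in> S\<close>]
    by (simp_all add: dist_real_def)
  moreover have "L * dist a b \<le> max L M * dist a b" "M * dist a b \<le> max L M * dist a b"
    by (simp_all add: mult_right_mono)
  ultimately show "dist (max (f a) (g a)) (max (f b) (g b)) \<le> max L M * dist a b"
    unfolding dist_real_def by linarith
next
  show "0 \<le> max L M"
    using lipschitz_on_nonneg[OF assms(1)] by simp
qed

lemma lipschitz_on_two_slopes:
  fixes a b z :: real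
  assumes "0 \<le> a" "0 \<le> b"
  shows "(max a b)-lipschitz_on UNIV (\<lambda>r. if r \<le> z then a*(r - z) else b*(r - z))"
proof (rule lipschitz_onI)
  have affine: "k-lipschitz_on S (\<lambda>r. k*(r - z))" if "0 \<le> k" for k and S :: "real set"
    using that by (intro lipschitz_onI) (auto simp: dist_real_def abs_mult right_diff_distrib[symmetric])
  fix x y :: real
  let ?lo = "min x (min y z)" and ?hi = "max x (max y z)"
  have "(max a b)-lipschitz_on {?lo..?hi} (\<lambda>r. if r \<le> z then a*(r - z) else b*(r - z))"
    by (rule lipschitz_on_concat_max[OF affine affine]) (use assms in auto)
  then show "dist (if x \<le> z then a*(x - z) else b*(x - z)) (if y \<le> z then a*(y - z) else b*(y - z))
      \<le> max a b * dist x y"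
    by (rule lipschitz_onD) auto
qed (use assms in auto)

lemma glob_lipschitz_const: "glob_lipschitz (\<lambda>_. a)"
  unfolding glob_lipschitz_def using lipschitz_on_constant by blast

lemma visc_subD:
  assumes "visc_sub H \<omega> \<mu> v" "\<And>z. (\<phi> has_real_derivative \<phi>' z) (at z)"
    and "continuous_on UNIV \<phi>'" "e > 0" "\<And>z. \<bar>z - y\<bar> < e \<Longrightarrow> v z - \<phi> z \<le> v y - \<phi> y"
  shows "H (\<phi>' y) y \<omega> \<le> \<mu>"
  using assms unfolding visc_sub_def by blast

lemma visc_subD_quadratic:
  assumes "visc_sub H \<omega> \<mu> v" "e > 0"
    and "\<And>z. \<bar>z - y\<bar> < e \<Longrightarrow> v z - (a*z + b*(z - c)\<^sup>2) \<le> v y - (a*y + b*(y - c)\<^sup>2)"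
  shows "H (a + 2*b*(y - c)) y \<omega> \<le> \<mu>"
proof -
  have "((\<lambda>r. a*r + b*(r - c)\<^sup>2) has_real_derivative a + 2*b*(z - c)) (at z)" for z
    by (auto intro!: derivative_eq_intros)
  moreover have "continuous_on UNIV (\<lambda>z. a + 2*b*(z - c))"
    by (intro continuous_intros)
  ultimately show ?thesis
    using visc_subD[OF assms(1), of "\<lambda>r. a*r + b*(r - c)\<^sup>2" "\<lambda>z. a + 2*b*(z - c)", OF _ _ assms(2)]
      assms(3) by blast
qed

lemma visc_sub_const:
  assumes "\<And>y. H 0 y \<omega> \<le> \<mu>"
  shows "visc_sub H \<omega> \<mu> (\<lambda>_. a)"
  unfolding visc_sub_def
proof (intro allI impI)
  fix y \<phi> \<phi>'
  assume "(\<forall>z. (\<phi> has_real_derivative \<phi>' z) (at z)) \<and> continuous_on UNIV \<phi>' \<and>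
    (\<exists>e>0. \<forall>z. \<bar>z - y\<bar> < e \<longrightarrow> a - \<phi> z \<le> a - \<phi> y)"
  then obtain e where "e > 0" "\<And>z. \<bar>z - y\<bar> < e \<Longrightarrow> a - \<phi> z \<le> a - \<phi> y"
    and "(\<phi> has_real_derivative \<phi>' y) (at y)"
    by blast
  then have "0 = \<phi>' y"
    by (intro local_max_diff_deriv_eq[of "\<lambda>_. a" 0 y \<phi> "\<phi>' y" e]) auto
  with assms show "H (\<phi>' y) y \<omega> \<le> \<mu>"
    by simp
qed

lemma visc_sub_reflect:
  assumes "visc_sub H \<omega> \<mu> v"
  shows "visc_sub (\<lambda>p y. H (- p) (- y)) \<omega> \<mu> (\<lambda>r. v (- r))"
  unfolding visc_sub_def
proof (intro allI impI)
  fix y \<phi> \<phi>'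
  assume "(\<forall>z. (\<phi> has_real_derivative \<phi>' z) (at z)) \<and> continuous_on UNIV \<phi>' \<and>
    (\<exists>e>0. \<forall>z. \<bar>z - y\<bar> < e \<longrightarrow> v (- z) - \<phi> z \<le> v (- y) - \<phi> y)"
  then obtain e where der: "\<And>z. (\<phi> has_real_derivative \<phi>' z) (at z)"
    and cont: "continuous_on UNIV \<phi>'" and "e > 0"
    and max: "\<And>z. \<bar>z - y\<bar> < e \<Longrightarrow> v (- z) - \<phi> z \<le> v (- y) - \<phi> y"
    by blast
  have "((\<lambda>z. \<phi> (- z)) has_real_derivative - \<phi>' (- z)) (at z)" for z
    using der[of "- z"] by (simp add: DERIV_mirror)
  moreover have "continuous_on UNIV (\<lambda>z. - \<phi>' (- z))"
    by (intro continuous_intros continuous_on_compose2[OF cont]) auto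
  moreover have "v z - \<phi> (- z) \<le> v (- y) - \<phi> (- (- y))" if "\<bar>z - (- y)\<bar> < e" for z
    using max[of "- z"] that by (simp add: abs_minus_commute add.commute)
  ultimately have "H (- \<phi>' (- (- y))) (- y) \<omega> \<le> \<mu>"
    using visc_subD[OF assms _ _ \<open>e > 0\<close>, of "\<lambda>z. \<phi> (- z)" "\<lambda>z. - \<phi>' (- z)" "- y"] by blast
  then show "H (- \<phi>' y) (- y) \<omega> \<le> \<mu>"
    by simp
qed

lemma visc_sub_max_locally_affine:
  assumes "visc_sub H \<omega> \<mu> v"
    and "\<And>u. v u < h u \<Longrightarrow>
      \<exists>e>0. \<exists>q. H q u \<omega> \<le> \<mu> \<and> (\<forall>r. \<bar>r - u\<bar> < e \<longrightarrow> h r = h u + q*(r - u))"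
  shows "visc_sub H \<omega> \<mu> (\<lambda>r. max (v r) (h r))"
  unfolding visc_sub_def
proof (intro allI impI)
  fix y \<phi> \<phi>'
  assume "(\<forall>z. (\<phi> has_real_derivative \<phi>' z) (at z)) \<and> continuous_on UNIV \<phi>' \<and>
    (\<exists>e>0. \<forall>z. \<bar>z - y\<bar> < e \<longrightarrow> max (v z) (h z) - \<phi> z \<le> max (v y) (h y) - \<phi> y)"
  then obtain e where der: "\<And>z. (\<phi> has_real_derivative \<phi>' z) (at z)"
    and cont: "continuous_on UNIV \<phi>'" and "e > 0"
    and max: "\<And>z. \<bar>z - y\<bar> < e \<Longrightarrow> max (v z) (h z) - \<phi> z \<le> max (v y) (h y) - \<phi> y"
    by blast
  show "H (\<phi>' y) y \<omega> \<le> \<mu>"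
  proof (cases "h y \<le> v y")
    case True
    then have "v z - \<phi> z \<le> v y - \<phi> y" if "\<bar>z - y\<bar> < e" for z
      using max[OF that] by linarith
    then show ?thesis
      using visc_subD[OF assms(1) der cont \<open>e > 0\<close>] by blast
  next
    case False
    then obtain e' q where "e' > 0" "H q y \<omega> \<le> \<mu>"
      and affine: "\<And>r. \<bar>r - y\<bar> < e' \<Longrightarrow> h r = h y + q*(r - y)"
      using assms(2)[of y] by auto
    have "(h y + q*(r - y)) - \<phi> r \<le> (h y + q*(y - y)) - \<phi> y" if "\<bar>r - y\<bar> < min e e'" for r
      using max[of r] affine[of r] False that by auto
    moreover have "((\<lambda>r. h y + q*(r - y)) has_real_derivative q) (at y)"
      by (auto intro!: derivative_eq_intros)
    ultimately have "q = \<phi>' y"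
      using local_max_diff_deriv_eq[of _ q y \<phi> "\<phi>' y" "min e e'"] der \<open>e > 0\<close> \<open>e' > 0\<close> by auto
    with \<open>H q y \<omega> \<le> \<mu>\<close> show ?thesis
      by simp
  qed
qed

lemma visc_sub_test_slope_near:
  fixes v :: "real \<Rightarrow> real"
  assumes "visc_sub H \<omega> \<mu> v" "L-lipschitz_on UNIV v" "\<rho> > 0"
  obtains p r where "\<bar>r - u\<bar> \<le> \<rho>" "H p r \<omega> \<le> \<mu>"
proof -
  have "L \<ge> 0"
    using assms(2) by (rule lipschitz_on_nonneg)
  define K where "K = (L + 1) / \<rho>"
  have "0 < K"
    using \<open>L \<ge> 0\<close> assms(3) unfolding K_def by simp
  define G where "G r = v r - K*(r - u)\<^sup>2" for r
  have near: "\<bar>r - u\<bar> \<le> \<rho>" if "G u \<le> G r" for r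
  proof -
    have "K * (r - u)\<^sup>2 \<le> L * \<bar>r - u\<bar>"
      using that lipschitz_onD[OF assms(2), of r u] unfolding G_def by (simp add: dist_real_def)
    then have "\<bar>r - u\<bar> \<le> L / K"
      by (rule quadratic_le_linear_imp_abs_le[OF \<open>0 < K\<close> \<open>L \<ge> 0\<close>])
    also have "\<dots> \<le> (L + 1) / K"
      using \<open>0 < K\<close> by (simp add: divide_right_mono)
    finally show ?thesis
      using assms(3) \<open>L \<ge> 0\<close> unfolding K_def by simp
  qed
  have "continuous_on UNIV G"
    unfolding G_def using lipschitz_on_continuous_on[OF assms(2)] by (intro continuous_intros)
  moreover have "bounded {r \<in> UNIV. G u \<le> G r}"
    using near by (intro bounded_subset[OF bounded_cball, of _ u \<rho>]) (auto simp: dist_real_def abs_minus_commute)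
  ultimately obtain r0 where "G u \<le> G r0" "\<And>r. G r \<le> G r0"
    using continuous_attains_sup_superlevel[of UNIV G u] by auto
  then have "H (0 + 2*K*(r0 - u)) r0 \<omega> \<le> \<mu>"
    by (intro visc_subD_quadratic[OF assms(1) zero_less_one, where a = 0]) (simp add: G_def)
  with near[OF \<open>G u \<le> G r0\<close>] show thesis
    by (rule that)
qed

lemma visc_sub_H0_le:
  fixes v :: "real \<Rightarrow> real"
  assumes "\<And>p y. H 0 y \<omega> \<le> H p y \<omega>"
    and "mono w" "(w \<longlongrightarrow> 0) (at_right 0)"
    and "\<And>p x y. \<bar>H p y \<omega> - H p x \<omega>\<bar> \<le> w (\<bar>x - y\<bar> * (1 + \<bar>p\<bar>))"
    and "visc_sub H \<omega> \<mu> v" "glob_lipschitz v"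
  shows "H 0 u \<omega> \<le> \<mu>"
proof -
  obtain L where lip: "L-lipschitz_on UNIV v"
    using assms(6) unfolding glob_lipschitz_def by blast
  have "H 0 u \<omega> \<le> \<mu> + w \<rho>" if "\<rho> > 0" for \<rho>
  proof -
    obtain p r where "\<bar>r - u\<bar> \<le> \<rho>" "H p r \<omega> \<le> \<mu>"
      using visc_sub_test_slope_near[OF assms(5) lip \<open>\<rho> > 0\<close>] .
    have "H 0 u \<omega> \<le> H 0 r \<omega> + w \<bar>u - r\<bar>"
      using assms(4)[of 0 r u] by simp
    also have "w \<bar>u - r\<bar> \<le> w \<rho>"
      using \<open>\<bar>r - u\<bar> \<le> \<rho>\<close> assms(2) by (simp add: monoD abs_minus_commute)
    also have "H 0 r \<omega> \<le> \<mu>"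
      using assms(1)[of r p] \<open>H p r \<omega> \<le> \<mu>\<close> by simp
    finally show ?thesis
      by simp
  qed
  then have "\<forall>\<^sub>F \<rho> in at_right 0. H 0 u \<omega> \<le> \<mu> + w \<rho>"
    by (auto simp: eventually_at_right_field intro: exI[of _ 1])
  moreover have "((\<lambda>\<rho>. \<mu> + w \<rho>) \<longlongrightarrow> \<mu> + 0) (at_right 0)"
    using assms(3) by (intro tendsto_intros)
  ultimately show ?thesis
    using tendsto_lowerbound[of "\<lambda>\<rho>. \<mu> + w \<rho>"] by force
qed

lemma H0_le_A_tilde:
  assumes "\<And>p y. H 0 y \<omega> \<le> H p y \<omega>"
    and "mono w" "(w \<longlongrightarrow> 0) (at_right 0)"
    and "\<And>p x y. \<bar>H p y \<omega> - H p x \<omega>\<bar> \<le> w (\<bar>x - y\<bar> * (1 + \<bar>p\<bar>))"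
    and "visc_sub H \<omega> \<mu> v" "glob_lipschitz v"
  shows "H 0 u \<omega> \<le> A_tilde H \<omega>"
  unfolding A_tilde_def
proof (rule cInf_greatest)
  show "{\<mu>. \<exists>v. glob_lipschitz v \<and> visc_sub H \<omega> \<mu> v} \<noteq> {}"
    using assms(5,6) by blast
  fix \<mu>' assume "\<mu>' \<in> {\<mu>. \<exists>v. glob_lipschitz v \<and> visc_sub H \<omega> \<mu> v}"
  then obtain v' where "visc_sub H \<omega> \<mu>' v'" "glob_lipschitz v'"
    by blast
  then show "H 0 u \<omega> \<le> \<mu>'"
    by (rule visc_sub_H0_le[where H = H and \<omega> = \<omega> and w = w, OF assms(1-4)])
qed

lemma H_le_of_abs_le_slack:
  fixes H :: "real \<Rightarrow> real \<Rightarrow> 'w \<Rightarrow> real"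
  assumes "0 < c" "\<And>p q. \<bar>H p u \<omega> - H q u \<omega>\<bar> \<le> c * \<bar>p - q\<bar>"
    and "H 0 u \<omega> \<le> A" "\<bar>q\<bar> \<le> (\<mu> - A) / c"
  shows "H q u \<omega> \<le> \<mu>"
proof -
  have "H q u \<omega> \<le> H 0 u \<omega> + c * \<bar>q\<bar>"
    using assms(2)[of q 0] by simp
  moreover have "c * \<bar>q\<bar> \<le> \<mu> - A"
    using assms(1,4) by (simp add: pos_le_divide_eq mult.commute)
  ultimately show ?thesis
    using assms(3) by simp
qed

lemma lipschitz_minus_parabola_attains_sup:
  fixes v :: "real \<Rightarrow> real"
  assumes "L-lipschitz_on UNIV v" "0 < \<delta>"
  obtains r0 where "x0 \<le> r0"
    "\<And>r. x0 \<le> r \<Longrightarrow> v r - (R*r + \<delta>*(r - x0)\<^sup>2) \<le> v r0 - (R*r0 + \<delta>*(r0 - x0)\<^sup>2)"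
proof -
  define G where "G r = v r - (R*r + \<delta>*(r - x0)\<^sup>2)" for r
  have bounded: "r \<le> x0 + (L + \<bar>R\<bar>) / \<delta>" if "x0 \<le> r" "G x0 \<le> G r" for r
  proof -
    have "\<delta> * (r - x0)\<^sup>2 \<le> v r - v x0 - R * (r - x0)"
      using that(2) unfolding G_def by (simp add: right_diff_distrib)
    also have "\<dots> \<le> L * (r - x0) + \<bar>R\<bar> * (r - x0)"
    proof -
      have "- R * (r - x0) \<le> \<bar>R\<bar> * (r - x0)"
        using that(1) by (intro mult_right_mono) auto
      then show ?thesis
        using lipschitz_onD[OF assms(1), of r x0] that(1) by (simp add: dist_real_def)
    qed
    finally have "\<bar>r - x0\<bar> \<le> (L + \<bar>R\<bar>) / \<delta>"
      using that(1) lipschitz_on_nonneg[OF assms(1)]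
      by (intro quadratic_le_linear_imp_abs_le[OF \<open>0 < \<delta>\<close>]) (simp_all add: distrib_right)
    then show ?thesis
      by linarith
  qed
  have "continuous_on {x0..} G"
    unfolding G_def
    by (intro continuous_intros continuous_on_subset[OF lipschitz_on_continuous_on[OF assms(1)]]) auto
  moreover have "x0 \<in> {x0..}"
    by simp
  moreover have "bounded {r \<in> {x0..}. G x0 \<le> G r}"
    using bounded by (intro bounded_subset[OF bounded_closed_interval, of _ x0 "x0 + (L + \<bar>R\<bar>) / \<delta>"]) auto
  ultimately obtain r0 where "r0 \<in> {x0..}" "\<And>r. r \<in> {x0..} \<Longrightarrow> G r \<le> G r0"
    using continuous_attains_sup_superlevel[OF closed_atLeast] by blast
  then show thesis
    using that unfolding G_def by simp
qed

(* delta makes the penalised function larger at y0 than at x0, so its maximum over [x0, oo)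
   lies strictly right of x0, where the touching parabola has slope at least R. *)
lemma visc_sub_secant_slope:
  fixes v :: "real \<Rightarrow> real"
  assumes "visc_sub H \<omega> \<mu> v" "L-lipschitz_on UNIV v" "x0 < y0" "R * (y0 - x0) < v y0 - v x0"
  obtains p r where "R \<le> p" "H p r \<omega> \<le> \<mu>"
proof -
  define \<delta> where "\<delta> = (v y0 - v x0 - R * (y0 - x0)) / (2 * (y0 - x0)\<^sup>2)"
  have "0 < \<delta>"
    using assms(3,4) unfolding \<delta>_def by simp
  define G where "G r = v r - (R*r + \<delta>*(r - x0)\<^sup>2)" for r
  have "\<delta> * (y0 - x0)\<^sup>2 = (v y0 - v x0 - R * (y0 - x0)) / 2"
    using assms(3) unfolding \<delta>_def by simp
  then have "G x0 < G y0"
    using assms(4) unfolding G_def by (simp add: algebra_simps)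
  obtain r0 where "x0 \<le> r0" and max: "\<And>r. x0 \<le> r \<Longrightarrow> G r \<le> G r0"
    unfolding G_def using lipschitz_minus_parabola_attains_sup[OF assms(2) \<open>0 < \<delta>\<close>, of x0 R] by blast
  have "x0 < r0"
    using max[of y0] assms(3) \<open>x0 \<le> r0\<close> \<open>G x0 < G y0\<close> by (cases "r0 = x0") auto
  then have "H (R + 2*\<delta>*(r0 - x0)) r0 \<omega> \<le> \<mu>"
    using max unfolding G_def by (intro visc_subD_quadratic[OF assms(1), of "r0 - x0"]) auto
  moreover have "R \<le> R + 2*\<delta>*(r0 - x0)"
    using \<open>0 < \<delta>\<close> \<open>x0 < r0\<close> by simp
  ultimately show thesis
    using that by blast
qed

lemma visc_sub_lipschitz_bound:
  assumes "visc_sub H \<omega> \<mu> v" "glob_lipschitz v" "\<And>p y. R \<le> \<bar>p\<bar> \<Longrightarrow> \<mu> < H p y \<omega>"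
  shows "v y - v x \<le> R * \<bar>y - x\<bar>"
proof -
  obtain L where lip: "L-lipschitz_on UNIV v"
    using assms(2) unfolding glob_lipschitz_def by blast
  consider "x < y" | "y < x" | "x = y"
    by linarith
  then show ?thesis
  proof cases
    case 1
    show ?thesis
    proof (rule ccontr)
      assume "\<not> ?thesis"
      with 1 have "R * (y - x) < v y - v x"
        by simp
      then obtain p r where "R \<le> p" "H p r \<omega> \<le> \<mu>"
        using visc_sub_secant_slope[OF assms(1) lip 1] by blast
      then show False
        using assms(3)[of p r] by linarith
    qed
  next
    case 2
    show ?thesis
    proof (rule ccontr)
      assume "\<not> ?thesis"
      with 2 have "R * (- y - - x) < v (- (- y)) - v (- (- x))"
        by simp
      moreover have "- x < - y"
        using 2 by simp
      ultimately obtain p r where "R \<le> p" "H (- p) (- r) \<omega> \<le> \<mu>"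
        using visc_sub_secant_slope[OF visc_sub_reflect[OF assms(1)] lipschitz_on_reflect[OF lip]]
        by blast
      then show False
        using assms(3)[of "- p" "- r"] by linarith
    qed
  qed simp
qed

(* Left of z the cone falls with the Lipschitz constant of v and so stays below v; where it
   exceeds v it is affine with the admissible slope l. *)
lemma visc_sub_cone_extension:
  fixes v :: "real \<Rightarrow> real"
  assumes "visc_sub H \<omega> \<mu> v" "L-lipschitz_on UNIV v" "0 \<le> l" "\<And>u. H l u \<omega> \<le> \<mu>"
    and "x \<le> z" "z \<le> y"
  obtains w where "glob_lipschitz w" "visc_sub H \<omega> \<mu> w" "w x = v x" "v z + l*(y - z) \<le> w y"
proof -
  have "0 \<le> L"
    using assms(2) by (rule lipschitz_on_nonneg)
  define h where "h r = v z + (if r \<le> z then L*(r - z) else l*(r - z))" for r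
  define w where "w r = max (v r) (h r)" for r
  have below: "h r \<le> v r" if "r \<le> z" for r
    using lipschitz_onD[OF assms(2), of z r] that unfolding h_def
    by (simp add: dist_real_def abs_le_iff algebra_simps)
  have "(max L (0 + max L l))-lipschitz_on UNIV w"
    unfolding w_def h_def
    by (intro lipschitz_on_max assms(2) lipschitz_on_add lipschitz_on_constant
        lipschitz_on_two_slopes \<open>0 \<le> L\<close> assms(3))
  then have "glob_lipschitz w"
    unfolding glob_lipschitz_def by blast
  moreover have "visc_sub H \<omega> \<mu> w"
    unfolding w_def
  proof (rule visc_sub_max_locally_affine[OF assms(1)])
    fix u assume "v u < h u"
    then have "0 < u - z"
      using below[of u] by linarith
    moreover have "h r = h u + l*(r - u)" if "\<bar>r - u\<bar> < u - z" for r
      using that unfolding h_def by (auto simp: algebra_simps)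
    ultimately show "\<exists>e>0. \<exists>q. H q u \<omega> \<le> \<mu> \<and> (\<forall>r. \<bar>r - u\<bar> < e \<longrightarrow> h r = h u + q*(r - u))"
      using assms(4)[of u] by blast
  qed
  moreover have "w x = v x"
    using below[OF assms(5)] unfolding w_def by simp
  moreover have "v z + l*(y - z) \<le> w y"
    using assms(6) unfolding w_def h_def by auto
  ultimately show thesis
    by (rule that)
qed

lemma visc_sub_cone_extension_between:
  assumes "visc_sub H \<omega> \<mu> v" "glob_lipschitz v" "0 \<le> l" "\<And>q u. \<bar>q\<bar> \<le> l \<Longrightarrow> H q u \<omega> \<le> \<mu>"
    and "x \<le> z \<and> z \<le> y \<or> y \<le> z \<and> z \<le> x"
  obtains w where "glob_lipschitz w" "visc_sub H \<omega> \<mu> w" "v z - v x + l * \<bar>y - z\<bar> \<le> w y - w x"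
proof -
  obtain L where lip: "L-lipschitz_on UNIV v"
    using assms(2) unfolding glob_lipschitz_def by blast
  from assms(5) consider "x \<le> z" "z \<le> y" | "y \<le> z" "z \<le> x"
    by blast
  then show thesis
  proof cases
    case 1
    moreover have "H l u \<omega> \<le> \<mu>" for u
      using assms(3,4) by simp
    ultimately obtain w where "glob_lipschitz w" "visc_sub H \<omega> \<mu> w" "w x = v x" "v z + l*(y - z) \<le> w y"
      using visc_sub_cone_extension[OF assms(1) lip assms(3)] by blast
    with 1 show thesis
      using that[of w] by simp
  next
    case 2
    then have "- x \<le> - z" "- z \<le> - y"
      by simp_all
    moreover have "H (- l) (- u) \<omega> \<le> \<mu>" for u
      using assms(3,4) by simp
    ultimately obtain w where w: "glob_lipschitz w" "visc_sub (\<lambda>p y. H (- p) (- y)) \<omega> \<mu> w"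
      "w (- x) = v (- (- x))" "v (- (- z)) + l*(- y - - z) \<le> w (- y)"
      using visc_sub_cone_extension[OF visc_sub_reflect[OF assms(1)] lipschitz_on_reflect[OF lip] assms(3)]
      by blast
    have "glob_lipschitz (\<lambda>r. w (- r))"
      using w(1) lipschitz_on_reflect unfolding glob_lipschitz_def by blast
    moreover have "visc_sub H \<omega> \<mu> (\<lambda>r. w (- r))"
      using visc_sub_reflect[OF w(2)] by simp
    moreover have "v z - v x + l * \<bar>y - z\<bar> \<le> w (- y) - w (- x)"
      using w(3,4) 2 by simp
    ultimately show thesis
      using that[of "\<lambda>r. w (- r)"] by blast
  qed
qed

lemma m_mu_ge:
  assumes "\<And>v y. visc_sub H \<omega> \<mu> v \<Longrightarrow> glob_lipschitz v \<Longrightarrow> v y - v x \<le> R * \<bar>y - x\<bar>"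
    and "visc_sub H \<omega> \<mu> v" "glob_lipschitz v"
  shows "v y - v x \<le> m_mu H \<mu> y x \<omega>"
  unfolding m_mu_def
proof (rule cSup_upper)
  show "v y - v x \<in> {v y - v x |v. glob_lipschitz v \<and> visc_sub H \<omega> \<mu> v}"
    using assms(2,3) by blast
  show "bdd_above {v y - v x |v. glob_lipschitz v \<and> visc_sub H \<omega> \<mu> v}"
    using assms(1) by (intro bdd_aboveI[of _ "R * \<bar>y - x\<bar>"]) blast
qed

lemma m_mu_self:
  assumes "visc_sub H \<omega> \<mu> v" "glob_lipschitz v"
  shows "m_mu H \<mu> x x \<omega> = 0"
proof -
  have "{v x - v x |v. glob_lipschitz v \<and> visc_sub H \<omega> \<mu> v} = {0}"
    using assms by auto
  then show ?thesis
    unfolding m_mu_def by simp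
qed

lemma m_mu_cone_growth:
  assumes bound: "\<And>v y. visc_sub H \<omega> \<mu> v \<Longrightarrow> glob_lipschitz v \<Longrightarrow> v y - v x \<le> R * \<bar>y - x\<bar>"
    and "visc_sub H \<omega> \<mu> v0" "glob_lipschitz v0"
    and "0 \<le> l" "\<And>q u. \<bar>q\<bar> \<le> l \<Longrightarrow> H q u \<omega> \<le> \<mu>"
    and "x \<le> z \<and> z \<le> y \<or> y \<le> z \<and> z \<le> x"
  shows "m_mu H \<mu> z x \<omega> + l * \<bar>y - z\<bar> \<le> m_mu H \<mu> y x \<omega>"
proof -
  have "m_mu H \<mu> z x \<omega> \<le> m_mu H \<mu> y x \<omega> - l * \<bar>y - z\<bar>"
    unfolding m_mu_def[of H \<mu> z]
  proof (rule cSup_least)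
    show "{v z - v x |v. glob_lipschitz v \<and> visc_sub H \<omega> \<mu> v} \<noteq> {}"
      using assms(2,3) by blast
    fix a assume "a \<in> {v z - v x |v. glob_lipschitz v \<and> visc_sub H \<omega> \<mu> v}"
    then obtain v where "a = v z - v x" "visc_sub H \<omega> \<mu> v" "glob_lipschitz v"
      by blast
    moreover obtain w where "glob_lipschitz w" "visc_sub H \<omega> \<mu> w"
      "v z - v x + l * \<bar>y - z\<bar> \<le> w y - w x"
      using visc_sub_cone_extension_between[OF \<open>visc_sub H \<omega> \<mu> v\<close> \<open>glob_lipschitz v\<close> assms(4-6)]
      by blast
    moreover have "w y - w x \<le> m_mu H \<mu> y x \<omega>"
      by (rule m_mu_ge[OF bound \<open>visc_sub H \<omega> \<mu> w\<close> \<open>glob_lipschitz w\<close>])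
    ultimately show "a \<le> m_mu H \<mu> y x \<omega> - l * \<bar>y - z\<bar>"
      by linarith
  qed
  then show ?thesis
    by simp
qed

lemma Sup_Inf_dist_le:
  fixes E F :: "real set"
  assumes "F \<noteq> {}" "\<And>y. y \<in> F \<Longrightarrow> \<exists>z\<in>E. \<bar>y - z\<bar> \<le> d"
  shows "(SUP y\<in>F. INF z\<in>E. \<bar>y - z\<bar>) \<le> d"
proof (rule cSUP_least[OF assms(1)])
  fix y assume "y \<in> F"
  then obtain z where "z \<in> E" "\<bar>y - z\<bar> \<le> d"
    using assms(2) by blast
  then show "(INF z\<in>E. \<bar>y - z\<bar>) \<le> d"
    by (intro cINF_lower2[where x = z]) (auto intro: bdd_belowI[of _ 0])
qed

lemma hausdorff_dist_le:
  assumes "E \<noteq> {}" "F \<noteq> {}"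
    and "\<And>y. y \<in> E \<Longrightarrow> \<exists>z\<in>F. \<bar>y - z\<bar> \<le> d" "\<And>y. y \<in> F \<Longrightarrow> \<exists>z\<in>E. \<bar>y - z\<bar> \<le> d"
  shows "hausdorff_dist E F \<le> d"
  unfolding hausdorff_dist_def using Sup_Inf_dist_le assms by simp

lemma hausdorff_dist_sublevel_sets_le:
  fixes m :: "real \<Rightarrow> real"
  assumes "0 < l" "m x \<le> t" "t \<le> s"
    and growth: "\<And>y z. x \<le> z \<and> z \<le> y \<or> y \<le> z \<and> z \<le> x \<Longrightarrow> m z + l * \<bar>y - z\<bar> \<le> m y"
  shows "hausdorff_dist {y. m y \<le> t} {y. m y \<le> s} \<le> (s - t) / l"
proof -
  define d where "d = (s - t) / l"
  have "0 \<le> d" "l * d = s - t"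
    using assms(1,3) unfolding d_def by simp_all
  have "hausdorff_dist {y. m y \<le> t} {y. m y \<le> s} \<le> d"
  proof (rule hausdorff_dist_le)
    show "{y. m y \<le> t} \<noteq> {}" "{y. m y \<le> s} \<noteq> {}"
      using assms(2,3) order_trans by auto
    show "\<exists>z\<in>{y. m y \<le> s}. \<bar>y - z\<bar> \<le> d" if "y \<in> {y. m y \<le> t}" for y
      using that assms(3) \<open>0 \<le> d\<close> by (intro bexI[of _ y]) auto
    show "\<exists>z\<in>{y. m y \<le> t}. \<bar>y - z\<bar> \<le> d" if "y \<in> {y. m y \<le> s}" for y
    proof (cases "\<bar>y - x\<bar> \<le> d")
      case True
      then show ?thesis
        using assms(2) by auto
    next
      case False
      define z where "z = (if x \<le> y then y - d else y + d)"
      have "x \<le> z \<and> z \<le> y \<or> y \<le> z \<and> z \<le> x" "\<bar>y - z\<bar> = d"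
        using False \<open>0 \<le> d\<close> unfolding z_def by auto
      then have "m z \<le> t"
        using growth[of z y] that \<open>l * d = s - t\<close> by simp
      with \<open>\<bar>y - z\<bar> = d\<close> show ?thesis
        by auto
    qed
  qed
  then show ?thesis
    unfolding d_def .
qed

theorem lemma4p10:
  fixes H :: "real \<Rightarrow> real \<Rightarrow> 'w \<Rightarrow> real"
    and c c0 C0 \<gamma> :: real and w :: "real \<Rightarrow> real"
    and x \<mu> t s :: real and \<omega> :: 'w
  assumes H1: "c > 0" "\<And>p q y \<omega>. \<bar>H p y \<omega> - H q y \<omega>\<bar> \<le> c * \<bar>p - q\<bar>"
    and H2: "c0 > 0" "C0 > 0" "\<gamma> > 0"
      "\<And>p y \<omega>. - c0 * \<bar>p + \<gamma>\<bar> \<le> H p y \<omega>" "\<And>p y \<omega>. H p y \<omega> \<le> C0 * \<bar>p + \<gamma>\<bar>"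
    and H3: "\<And>M. \<exists>R. \<forall>p y \<omega>. \<bar>p\<bar> \<ge> R \<longrightarrow> H p y \<omega> \<ge> M"
    and H4: "mono w" "\<And>r. w r \<ge> 0" "(w \<longlongrightarrow> 0) (at_right 0)"
      "\<And>p x y \<omega>. \<bar>H p y \<omega> - H p x \<omega>\<bar> \<le> w (\<bar>x - y\<bar> * (1 + \<bar>p\<bar>))"
    and H5: "\<And>y \<omega>. convex_on UNIV (\<lambda>p. H p y \<omega>)"
    and H6: "\<And>p y \<omega>. H p y \<omega> \<ge> H 0 y \<omega>"
    and mu: "\<mu> > A_tilde H \<omega>"
    and ts: "0 \<le> t" "t \<le> s"
  shows "hausdorff_dist (reachable H \<mu> t x \<omega>) (reachable H \<mu> s x \<omega>)
           \<le> (s - t) / ((\<mu> - A_tilde H \<omega>) / c)"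
proof -
  have "H 0 y \<omega> \<le> H (- \<gamma>) y \<omega>" "H (- \<gamma>) y \<omega> \<le> 0" for y
    using H6[of y \<omega> "- \<gamma>"] H2(5)[of "- \<gamma>" y \<omega>] by simp_all
  then have "visc_sub H \<omega> 0 (\<lambda>_. 0)"
    by (intro visc_sub_const) (meson order_trans)
  then have A: "H 0 u \<omega> \<le> A_tilde H \<omega>" for u
    by (rule H0_le_A_tilde[where H = H and \<omega> = \<omega> and w = w, OF H6 H4(1,3,4) _ glob_lipschitz_const])
  define l where "l = (\<mu> - A_tilde H \<omega>) / c"
  have "0 < l"
    using mu H1(1) unfolding l_def by simp
  have slopes: "H q u \<omega> \<le> \<mu>" if "\<bar>q\<bar> \<le> l" for q u
    using H1 A that unfolding l_def by (rule H_le_of_abs_le_slack)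
  have sub: "visc_sub H \<omega> \<mu> (\<lambda>_. 0)"
    using slopes \<open>0 < l\<close> by (intro visc_sub_const) simp
  obtain R where R: "\<forall>p y \<omega>. R \<le> \<bar>p\<bar> \<longrightarrow> \<mu> + 1 \<le> H p y \<omega>"
    using H3[of "\<mu> + 1"] by blast
  have steep: "\<mu> < H p y \<omega>" if "R \<le> \<bar>p\<bar>" for p y
    using R[rule_format, OF that, of y \<omega>] by linarith
  have bound: "v y - v x \<le> R * \<bar>y - x\<bar>" if "visc_sub H \<omega> \<mu> v" "glob_lipschitz v" for v y
    using visc_sub_lipschitz_bound[OF that steep] .
  have "hausdorff_dist {y. m_mu H \<mu> y x \<omega> \<le> t} {y. m_mu H \<mu> y x \<omega> \<le> s} \<le> (s - t) / l"
    using m_mu_self[OF sub glob_lipschitz_const] ts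
      m_mu_cone_growth[OF bound sub glob_lipschitz_const less_imp_le[OF \<open>0 < l\<close>] slopes]
    by (intro hausdorff_dist_sublevel_sets_le[OF \<open>0 < l\<close>]) auto
  then show ?thesis
    unfolding reachable_def l_def .
qed

end
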